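(* Let $\mathcal A=\{p_1,\dots,p_n\}\subset\mathbb R^2$ be a point set not contained in a line, with $p_1$ and $p_2$ having different second coordinates. Then the expansion cone $\overline{Y_0}(\mathcal A)$ has full dimension $3n-3$ in $S$, and it is a pointed polyhedral cone, i.e. it contains no pair of opposite non-zero vectors.
   Context: Write $v_i=(v_i^1,v_i^2)\in\mathbb R^2$. Define $$S=\{(v_1,\dots,v_n,t_1,\dots,t_n)\in(\mathbb R^2)^n\times\mathbb R^n:\ v_1^1=v_1^2=v_2^1=0\},$$ a $(3n-3)$-dimensional subspace of $\mathbb R^{3n}$. The expansion cone $\overline{Y_0}(\mathcal A)$ is the set of $(v,t)\in S$ satisfying both of: - $\langle p_i-p_j,v_i-v_j\rangle-|p_i-p_j|(t_i+t_j)\ge 0$ for all $1\le i<j\le n$; - $t_j\ge 0$ for all $j$. *)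

theory Defs
  imports "HOL-Analysis.Analysis"
begin

text \<open>Points p_1..p_n are indexed by a finite type 'n with CARD('n) = n;
  the distinguished indices 1 and 2 are i1 and i2. A vector of R^{3n} is a pair (v,t)
  with v :: (real^2)^'n and t :: real^'n.\<close>

definition S_space :: "'n::finite \<Rightarrow> 'n \<Rightarrow> (((real^2)^'n) \<times> (real^'n)) set" where
  "S_space i1 i2 = {(v, t). v$i1$1 = 0 \<and> v$i1$2 = 0 \<and> v$i2$1 = 0}"

definition expansion_cone ::
  "('n::finite \<Rightarrow> real^2) \<Rightarrow> 'n \<Rightarrow> 'n \<Rightarrow> (((real^2)^'n) \<times> (real^'n)) set" where
  "expansion_cone p i1 i2 = {(v, t) \<in> S_space i1 i2.
      (\<forall>i j. i \<noteq> j \<longrightarrow>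
         inner (p i - p j) (v$i - v$j) - norm (p i - p j) * (t$i + t$j) \<ge> 0)
    \<and> (\<forall>j. t$j \<ge> 0)}"

end

theory Submission
  imports Defs
begin

text \<open>Writing \<open>E\<^sub>i\<^sub>j(v,t) = \<langle>p\<^sub>i - p\<^sub>j, v\<^sub>i - v\<^sub>j\<rangle> - |p\<^sub>i - p\<^sub>j|(t\<^sub>i + t\<^sub>j)\<close>, the expansion cone is cut out of the
  coordinate subspace \<open>S\<close> by finitely many linear inequalities, so it is a polyhedral cone.
  It is full-dimensional in \<open>S\<close> because it contains a point of \<open>S\<close> at which all these
  inequalities are strict: take \<open>v\<^sub>i = f(p\<^sub>i - p\<^sub>1)\<close> for a linear map \<open>f = id + c J\<close>
  (\<open>J\<close> a quarter turn), which satisfies \<open>\<langle>a, f a\<rangle> = |a|\<^sup>2\<close>, and all \<open>t\<^sub>i\<close> small and positive.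
  It is pointed because \<open>x\<close> and \<open>-x\<close> in the cone force \<open>t = 0\<close> and make \<open>v\<close> an
  infinitesimal motion of the complete bar framework on the points; the constraints defining
  \<open>S\<close> pin \<open>v\<^sub>1\<close> and \<open>v\<^sub>2\<close> to zero, and a framework in the plane that is not contained in a line
  and has two pinned points is infinitesimally rigid.\<close>

lemma orthogonal_noncollinear_eq_0:
  fixes a b w :: "'a::euclidean_space"
  assumes "DIM('a) = 2" "\<not> collinear {0, a, b}" "orthogonal a w" "orthogonal b w"
  shows "w = 0"
proof (rule ccontr)
  assume "w \<noteq> 0"
  have "{0, a, b} \<subseteq> {x. w \<bullet> x = 0}"
    using assms(3,4) by (auto simp: orthogonal_def inner_commute)
  then have "aff_dim {0, a, b} \<le> aff_dim {x. w \<bullet> x = 0}"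
    by (rule aff_dim_subset)
  also have "\<dots> = 1"
    using \<open>w \<noteq> 0\<close> assms(1) by simp
  finally show False
    using assms(2) collinear_aff_dim by blast
qed

lemma aff_dim_coordinate_subspace:
  fixes B :: "'a::euclidean_space set"
  assumes "B \<subseteq> Basis"
  shows "aff_dim {x. \<forall>b\<in>B. x \<bullet> b = 0} = int DIM('a) - int (card B)"
proof -
  have eq: "{x. \<forall>b\<in>B. x \<bullet> b = 0} = {x. \<forall>i\<in>Basis. i \<notin> Basis - B \<longrightarrow> x \<bullet> i = 0}"
    using assms by auto
  have "dim {x. \<forall>i\<in>Basis. i \<notin> Basis - B \<longrightarrow> x \<bullet> i = 0} = card (Basis - B)"
    by (rule dim_substandard) blast
  moreover have "card (Basis - B) = DIM('a) - card B" "card B \<le> DIM('a)"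
    using assms by (simp_all add: card_Diff_subset finite_subset card_mono)
  ultimately show ?thesis
    unfolding eq by (simp add: aff_dim_subspace subspace_substandard of_nat_diff)
qed

lemma polyhedron_linear_ge:
  fixes f :: "'i::finite \<Rightarrow> 'a::euclidean_space \<Rightarrow> real"
  assumes "\<And>i. linear (f i)"
  shows "polyhedron {x. \<forall>i. b i \<le> f i x}"
proof -
  have "f i x = adjoint (f i) 1 \<bullet> x" for i x
    using adjoint_works[OF assms, where x = x and y = 1] by (simp add: inner_commute)
  then have "{x. \<forall>i. b i \<le> f i x} = (\<Inter>i. {x. adjoint (f i) 1 \<bullet> x \<ge> b i})"
    by auto
  then show ?thesis
    by (auto intro: polyhedron_halfspace_ge)
qed

definition infinitesimal_motion :: "('i \<Rightarrow> 'a::real_inner) \<Rightarrow> ('i \<Rightarrow> 'a) \<Rightarrow> bool" where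
  "infinitesimal_motion p v \<longleftrightarrow> (\<forall>i j. orthogonal (p i - p j) (v i - v j))"

lemma infinitesimal_motion_pinned_triangle:
  fixes p v :: "'i \<Rightarrow> 'a::euclidean_space"
  assumes "DIM('a) = 2" "infinitesimal_motion p v" "v a = 0" "v b = 0"
    and "\<not> collinear {p a, p k, p b}"
  shows "v k = 0"
proof (rule orthogonal_noncollinear_eq_0[OF assms(1)])
  show "\<not> collinear {0, p a - p k, p b - p k}"
    using assms(5) collinear_3 by auto
  show "orthogonal (p a - p k) (v k)" "orthogonal (p b - p k) (v k)"
    using assms(2-4) unfolding infinitesimal_motion_def
    by (metis diff_zero orthogonal_clauses(3) minus_diff_eq)+
qed

lemma infinitesimal_motion_pinned_eq_0:
  fixes p v :: "'i \<Rightarrow> 'a::euclidean_space"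
  assumes "DIM('a) = 2" "inj p" "\<not> collinear (range p)" "infinitesimal_motion p v"
    and "v a = 0" "v b = 0" "a \<noteq> b"
  shows "v k = 0"
proof -
  have "p a \<noteq> p b"
    using assms(2,7) by (simp add: inj_eq)
  obtain m where m: "\<not> collinear {p a, p m, p b}"
  proof -
    have "\<not> range p \<subseteq> affine hull {p a, p b}"
      using assms(3) collinear_subset collinear_affine_hull_collinear collinear_2 by blast
    then show thesis
      using that collinear_3_affine_hull[OF \<open>p a \<noteq> p b\<close>] by (auto simp: insert_commute)
  qed
  have "v m = 0"
    using infinitesimal_motion_pinned_triangle[OF assms(1,4-6) m] .
  show ?thesis
  proof (cases "collinear {p a, p k, p b}")
    case False
    then show ?thesis
      using infinitesimal_motion_pinned_triangle[OF assms(1,4-6)] by blast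
  next
    case True
    show ?thesis
    proof (cases "k = a")
      case False
      then have "p a \<noteq> p k"
        using assms(2) by (auto simp: inj_eq)
      have "\<not> collinear {p a, p k, p m}"
      proof
        assume "collinear {p a, p k, p m}"
        moreover have "collinear {p b, p a, p k}"
          using True by (simp add: insert_commute)
        ultimately have "collinear {p b, p a, p m}"
          using collinear_3_trans \<open>p a \<noteq> p k\<close> by blast
        with m show False
          by (simp add: insert_commute)
      qed
      then show ?thesis
        using infinitesimal_motion_pinned_triangle[OF assms(1,4,5) \<open>v m = 0\<close>] by blast
    qed (use assms(5) in simp)
  qed
qed

definition edge_expansion ::
  "('n::finite \<Rightarrow> real^2) \<Rightarrow> 'n \<Rightarrow> 'n \<Rightarrow> ((real^2)^'n) \<times> (real^'n) \<Rightarrow> real" where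
  "edge_expansion p i j x =
     inner (p i - p j) (fst x $ i - fst x $ j) - norm (p i - p j) * (snd x $ i + snd x $ j)"

lemma linear_edge_expansion: "linear (edge_expansion p i j)"
  by (rule linearI) (auto simp: edge_expansion_def inner_add_right inner_diff_right algebra_simps)

lemma edge_expansion_self [simp]: "edge_expansion p i i x = 0"
  by (simp add: edge_expansion_def)

lemma expansion_cone_eq:
  "expansion_cone p i1 i2 =
     S_space i1 i2 \<inter> {x. \<forall>i j. 0 \<le> edge_expansion p i j x} \<inter> {x. \<forall>j. 0 \<le> snd x $ j}"
proof -
  have "(\<forall>i j. 0 \<le> edge_expansion p i j x) \<longleftrightarrow> (\<forall>i j. i \<noteq> j \<longrightarrow> 0 \<le> edge_expansion p i j x)"
    for x
    by (metis edge_expansion_self order_refl)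
  then show ?thesis
    by (auto simp: expansion_cone_def edge_expansion_def)
qed

lemma S_space_eq_coordinate_subspace:
  "S_space i1 i2 =
     {x. \<forall>b \<in> {(axis i1 (axis 1 1), 0), (axis i1 (axis 2 1), 0), (axis i2 (axis 1 1), 0)}.
        x \<bullet> b = 0}"
  by (auto simp: S_space_def inner_prod_def inner_axis)

lemma subspace_S_space: "subspace (S_space i1 i2)"
  unfolding S_space_eq_coordinate_subspace
  by (auto simp: subspace_def inner_add_left)

lemma aff_dim_S_space:
  assumes "(i1::'n::finite) \<noteq> i2"
  shows "aff_dim (S_space i1 i2) = 3 * int CARD('n) - 3"
proof -
  let ?B = "{(axis i1 (axis 1 1), 0), (axis i1 (axis 2 1), 0), (axis i2 (axis 1 1), 0)}
    :: (((real^2)^'n) \<times> (real^'n)) set"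
  have "aff_dim {x. \<forall>b\<in>?B. x \<bullet> b = 0} = int DIM(((real^2)^'n) \<times> (real^'n)) - int (card ?B)"
    by (rule aff_dim_coordinate_subspace) (auto simp: Basis_prod_def Basis_vec_def)
  moreover have "card ?B = 3"
    using assms by (simp add: axis_eq_axis)
  ultimately show ?thesis
    unfolding S_space_eq_coordinate_subspace by simp
qed

lemma polyhedron_expansion_cone:
  fixes p :: "'n::finite \<Rightarrow> real^2"
  shows "polyhedron (expansion_cone p i1 i2)"
proof -
  have "polyhedron (S_space i1 i2)"
    by (simp add: affine_imp_polyhedron subspace_imp_affine subspace_S_space)
  moreover have "polyhedron {x. \<forall>ij. 0 \<le> edge_expansion p (fst ij) (snd ij) x}"
    by (rule polyhedron_linear_ge) (rule linear_edge_expansion)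
  moreover have "polyhedron {x :: ((real^2)^'n) \<times> (real^'n). \<forall>j. 0 \<le> snd x $ j}"
    by (rule polyhedron_linear_ge) (rule linearI, auto)
  ultimately show ?thesis
    unfolding expansion_cone_eq by (simp add: Int_assoc)
qed

lemma cone_expansion_cone: "cone (expansion_cone p i1 i2)"
  unfolding cone_def expansion_cone_eq
  using subspace_S_space[of i1 i2]
  by (auto simp: subspace_scale linear_cmul[OF linear_edge_expansion])

lemma expansion_cone_pointed:
  fixes p :: "'n::finite \<Rightarrow> real^2"
  assumes "i1 \<noteq> i2" "inj p" "\<not> collinear (range p)" "p i1 $ 2 \<noteq> p i2 $ 2"
    and x: "x \<in> expansion_cone p i1 i2" and neg_x: "- x \<in> expansion_cone p i1 i2"
  shows "x = 0"
proof -
  obtain v t where vt: "x = (v, t)"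
    by (cases x)
  have "t = 0"
    using x neg_x by (auto simp: vt expansion_cone_eq vec_eq_iff intro: order_antisym)
  have "edge_expansion p i j x = 0" for i j
    using x neg_x linear_neg[OF linear_edge_expansion, of p i j x]
    unfolding expansion_cone_eq by (metis (mono_tags) Int_iff mem_Collect_eq neg_0_le_iff_le order_antisym)
  then have motion: "infinitesimal_motion p (($) v)"
    by (simp add: infinitesimal_motion_def orthogonal_def edge_expansion_def vt \<open>t = 0\<close>)
  have "v $ i1 = 0" "v $ i2 $ 1 = 0"
    using x by (auto simp: vt expansion_cone_eq S_space_def vec_eq_iff forall_2)
  have "v $ i2 = 0"
  proof (rule orthogonal_noncollinear_eq_0)
    show "\<not> collinear {0, axis 1 1, p i2 - p i1}"
      using assms(4) by (auto simp: collinear_lemma vec_eq_iff forall_2 axis_def)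
    show "orthogonal (axis 1 1) (v $ i2)"
      using \<open>v $ i2 $ 1 = 0\<close> by (simp add: orthogonal_def inner_axis' inner_commute)
    show "orthogonal (p i2 - p i1) (v $ i2)"
      using motion \<open>v $ i1 = 0\<close> by (metis infinitesimal_motion_def diff_zero)
  qed simp
  have "v = 0"
    using infinitesimal_motion_pinned_eq_0[OF _ assms(2,3) motion \<open>v $ i1 = 0\<close> \<open>v $ i2 = 0\<close> assms(1)]
    by (simp add: vec_eq_iff)
  with \<open>t = 0\<close> show ?thesis
    by (simp add: vt zero_prod_def)
qed

lemma exists_linear_inner_self_eq_norm:
  fixes d :: "real^2"
  assumes "d $ 2 \<noteq> 0"
  obtains f :: "real^2 \<Rightarrow> real^2"
    where "linear f" "f d $ 1 = 0" "\<And>a. a \<bullet> f a = (norm a)\<^sup>2"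
proof
  define c where "c = d $ 1 / d $ 2"
  define f :: "real^2 \<Rightarrow> real^2" where "f a = vector [a $ 1 - c * a $ 2, a $ 2 + c * a $ 1]" for a
  show "linear f"
    by (rule linearI) (simp_all add: f_def vec_eq_iff forall_2 algebra_simps)
  show "f d $ 1 = 0"
    using assms by (simp add: f_def c_def)
  show "a \<bullet> f a = (norm a)\<^sup>2" for a
    by (simp add: f_def power2_norm_eq_inner inner_vec_def sum_2 algebra_simps)
qed

lemma expansion_cone_strict_point:
  fixes p :: "'n::finite \<Rightarrow> real^2"
  assumes "inj p" "p i1 $ 2 \<noteq> p i2 $ 2"
  obtains x where "x \<in> S_space i1 i2"
    and "\<And>i j. i \<noteq> j \<Longrightarrow> 0 < edge_expansion p i j x" and "\<And>j. 0 < snd x $ j"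
proof -
  obtain f where f: "linear f" "f (p i2 - p i1) $ 1 = 0" "\<And>a. a \<bullet> f a = (norm a)\<^sup>2"
    using exists_linear_inner_self_eq_norm[of "p i2 - p i1"] assms(2) by auto
  define D where "D = (\<lambda>(i, j). norm (p i - p j)) ` {(i, j). i \<noteq> j}"
  define \<epsilon> where "\<epsilon> = Min D / 4"
  have mem_D: "norm (p i - p j) \<in> D" if "i \<noteq> j" for i j
    unfolding D_def using that by (intro image_eqI[of _ _ "(i, j)"]) auto
  have "finite D"
    unfolding D_def by simp
  moreover have "D \<noteq> {}"
    using mem_D[of i1 i2] assms(2) by auto
  moreover have "\<forall>d\<in>D. 0 < d"
    using assms(1) by (auto simp: D_def inj_eq)
  ultimately have "0 < \<epsilon>"
    by (simp add: \<epsilon>_def)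
  have \<epsilon>: "2 * \<epsilon> < norm (p i - p j)" if "i \<noteq> j" for i j
    using Min_le[OF \<open>finite D\<close> mem_D[OF that]] \<open>0 < \<epsilon>\<close> by (simp add: \<epsilon>_def)
  define x :: "((real^2)^'n) \<times> (real^'n)" where "x = ((\<chi> i. f (p i - p i1)), (\<chi> i. \<epsilon>))"
  show thesis
  proof
    show "x \<in> S_space i1 i2"
      using f(2) linear_0[OF f(1)] by (simp add: x_def S_space_def)
    show "0 < snd x $ j" for j
      using \<open>0 < \<epsilon>\<close> by (simp add: x_def)
    show "0 < edge_expansion p i j x" if "i \<noteq> j" for i j
    proof -
      have "edge_expansion p i j x = (p i - p j) \<bullet> f (p i - p j) - norm (p i - p j) * (2 * \<epsilon>)"
        by (simp add: edge_expansion_def x_def linear_diff[OF f(1), symmetric])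
      also have "\<dots> = norm (p i - p j) * (norm (p i - p j) - 2 * \<epsilon>)"
        by (simp add: f(3) power2_eq_square algebra_simps)
      also have "\<dots> > 0"
        using \<epsilon>[OF that] \<open>0 < \<epsilon>\<close> by (intro mult_pos_pos) auto
      finally show ?thesis .
    qed
  qed
qed

lemma aff_dim_expansion_cone:
  fixes p :: "'n::finite \<Rightarrow> real^2"
  assumes "i1 \<noteq> i2" "inj p" "p i1 $ 2 \<noteq> p i2 $ 2"
  shows "aff_dim (expansion_cone p i1 i2) = 3 * int CARD('n) - 3"
proof -
  define U where "U = (\<Inter>i. \<Inter>j\<in>- {i}. {x. 0 < edge_expansion p i j x}) \<inter> (\<Inter>j. {x. 0 < snd x $ j})"
  have "open U"
  proof -
    have "continuous_on UNIV (edge_expansion p i j)" for i j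
      using linear_edge_expansion linear_conv_bounded_linear linear_continuous_on by blast
    moreover have "continuous_on UNIV (\<lambda>x::((real^2)^'n) \<times> (real^'n). snd x $ j)" for j
      by (intro continuous_on_component continuous_on_snd continuous_on_id)
    ultimately show ?thesis
      unfolding U_def by (intro open_Int open_INT finite ballI open_Collect_less continuous_on_const)
  qed
  obtain x where "x \<in> S_space i1 i2"
    and "\<And>i j. i \<noteq> j \<Longrightarrow> 0 < edge_expansion p i j x" and "\<And>j. 0 < snd x $ j"
    using expansion_cone_strict_point[OF assms(2,3)] by blast
  then have "aff_dim (S_space i1 i2 \<inter> U) = aff_dim (S_space i1 i2)"
    by (intro aff_dim_convex_Int_open subspace_imp_convex subspace_S_space \<open>open U\<close>)
      (auto simp: U_def)
  moreover have "S_space i1 i2 \<inter> U \<subseteq> expansion_cone p i1 i2"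
  proof -
    have "0 \<le> edge_expansion p i j x" if "x \<in> U" for i j x
      using that by (cases "i = j") (auto simp: U_def intro: less_imp_le)
    then show ?thesis
      by (auto simp: expansion_cone_eq U_def intro: less_imp_le)
  qed
  moreover have "expansion_cone p i1 i2 \<subseteq> S_space i1 i2"
    by (auto simp: expansion_cone_def)
  ultimately show ?thesis
    using aff_dim_S_space[OF assms(1)] aff_dim_subset[of "S_space i1 i2 \<inter> U" "expansion_cone p i1 i2"]
      aff_dim_subset[of "expansion_cone p i1 i2" "S_space i1 i2"] by linarith
qed

theorem mainTheorem9:
  fixes p :: "'n::finite \<Rightarrow> real^2" and i1 i2 :: 'n
  assumes "i1 \<noteq> i2"
    and "inj p"
    and "\<not> collinear (range p)"
    and "p i1 $ 2 \<noteq> p i2 $ 2"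
  shows "aff_dim (expansion_cone p i1 i2) = 3 * int CARD('n) - 3
    \<and> polyhedron (expansion_cone p i1 i2)
    \<and> cone (expansion_cone p i1 i2)
    \<and> (\<forall>x \<in> expansion_cone p i1 i2. - x \<in> expansion_cone p i1 i2 \<longrightarrow> x = 0)"
  by (intro conjI ballI impI aff_dim_expansion_cone polyhedron_expansion_cone cone_expansion_cone
      expansion_cone_pointed[OF assms] assms)

end
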